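(* Let $D$ be a database, $\mathcal{A}$ an automaton and $s,t$ vertices of $D$. Let $P_{s,t}=\{w\in\llbracket\mathcal{A}\rrbracket_W(D): \mathrm{src}(w)=s,\ \mathrm{tgt}(w)=t\}$. Every walk of minimal length in $P_{s,t}$ belongs to $\llbracket\mathcal{A}\rrbracket_{SR}(D)$.
   Context: A database is $D=(\Sigma,V,E,\mathrm{src},\mathrm{tgt},\mathrm{lbl})$ with finite alphabet $\Sigma$, finite vertex set $V$, finite edge set $E$, $\mathrm{src},\mathrm{tgt}:E\to V$, $\mathrm{lbl}:E\to2^\Sigma$. A walk is $(n_0,e_0,\dots,e_{k-1},n_k)$ with $\mathrm{src}(e_i)=n_i$, $\mathrm{tgt}(e_i)=n_{i+1}$; its length is $k$. A walk is simple if it repeats no vertex. An automaton is $\mathcal{A}=(\Sigma,Q,\Delta,I,F)$ with $\Delta\subseteq Q\times\Sigma\times Q$. The run database $D\times\mathcal{A}$ has vertices $V\times Q$ and edges $(e,(q,a,q'))$ for $e\in E$, $(q,a,q')\in\Delta$, $a\in\mathrm{lbl}(e)$, from $(\mathrm{src}(e),q)$ to $(\mathrm{tgt}(e),q')$. A run is a walk of $D\times\mathcal{A}$ from $V\times I$ to $V\times F$; $\pi_D$ is the projection to $D$. Walk semantics: $\llbracket\mathcal{A}\rrbracket_W(D)$ is the bag of $\pi_D(r)$ over all runs $r$ (equivalently the walks $w$ of $D$ with $\mathrm{lbl}(w)\cap L(\mathcal{A})\neq\emptyset$, where $\mathrm{lbl}(w)=\{u_0\cdots u_{k-1}:u_i\in\mathrm{lbl}(e_i)\}$).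 Simple-run semantics: $\llbracket\mathcal{A}\rrbracket_{SR}(D)$ is the bag of $\pi_D(r)$ over all simple runs $r$. *)

theory Defs
  imports Main
begin

record ('s, 'v, 'e) db =
  verts :: "'v set"
  edges :: "'e set"
  src :: "'e \<Rightarrow> 'v"
  tgt :: "'e \<Rightarrow> 'v"
  lbl :: "'e \<Rightarrow> 's set"

definition wf_db :: "'s set \<Rightarrow> ('s, 'v, 'e) db \<Rightarrow> bool" where
  "wf_db \<Sigma> D \<longleftrightarrow> finite \<Sigma> \<and> finite (verts D) \<and> finite (edges D) \<and>
     (\<forall>e \<in> edges D. src D e \<in> verts D \<and> tgt D e \<in> verts D \<and> lbl D e \<subseteq> \<Sigma>)"

record ('s, 'q) automaton =
  states :: "'q set"
  delta :: "('q \<times> 's \<times> 'q) set"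
  init :: "'q set"
  final :: "'q set"

definition wf_aut :: "'s set \<Rightarrow> ('s, 'q) automaton \<Rightarrow> bool" where
  "wf_aut \<Sigma> A \<longleftrightarrow> finite (states A) \<and> delta A \<subseteq> states A \<times> \<Sigma> \<times> states A \<and>
     init A \<subseteq> states A \<and> final A \<subseteq> states A"

text \<open>A walk (n0, e0, ..., e(k-1), nk) is represented by its start vertex n0 and
  its list of edges [e0, ..., e(k-1)]; the vertices n1..nk are the targets.\<close>
type_synonym ('v, 'e) walk = "'v \<times> 'e list"

definition walk_verts :: "('s, 'v, 'e) db \<Rightarrow> ('v, 'e) walk \<Rightarrow> 'v list" where
  "walk_verts D w = fst w # map (tgt D) (snd w)"

definition is_walk :: "('s, 'v, 'e) db \<Rightarrow> ('v, 'e) walk \<Rightarrow> bool" where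
  "is_walk D w \<longleftrightarrow> fst w \<in> verts D \<and> set (snd w) \<subseteq> edges D \<and>
     (\<forall>i < length (snd w). src D (snd w ! i) = walk_verts D w ! i)"

definition walk_len :: "('v, 'e) walk \<Rightarrow> nat" where
  "walk_len w = length (snd w)"

definition walk_src :: "('s, 'v, 'e) db \<Rightarrow> ('v, 'e) walk \<Rightarrow> 'v" where
  "walk_src D w = fst w"

definition walk_tgt :: "('s, 'v, 'e) db \<Rightarrow> ('v, 'e) walk \<Rightarrow> 'v" where
  "walk_tgt D w = last (walk_verts D w)"

definition simple_walk :: "('s, 'v, 'e) db \<Rightarrow> ('v, 'e) walk \<Rightarrow> bool" where
  "simple_walk D w \<longleftrightarrow> is_walk D w \<and> distinct (walk_verts D w)"

text \<open>Run database D x A. Edge labels are irrelevant; we label (e,(q,a,q')) by {a}.\<close>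
definition run_db :: "('s, 'v, 'e) db \<Rightarrow> ('s, 'q) automaton \<Rightarrow>
    ('s, 'v \<times> 'q, 'e \<times> ('q \<times> 's \<times> 'q)) db" where
  "run_db D A = \<lparr> verts = verts D \<times> states A,
      edges = {(e, (q, a, q')). e \<in> edges D \<and> (q, a, q') \<in> delta A \<and> a \<in> lbl D e},
      src = (\<lambda>(e, (q, a, q')). (src D e, q)),
      tgt = (\<lambda>(e, (q, a, q')). (tgt D e, q')),
      lbl = (\<lambda>(e, (q, a, q')). {a}) \<rparr>"

definition is_run :: "('s, 'v, 'e) db \<Rightarrow> ('s, 'q) automaton \<Rightarrow>
    ('v \<times> 'q, 'e \<times> ('q \<times> 's \<times> 'q)) walk \<Rightarrow> bool" where
  "is_run D A r \<longleftrightarrow> is_walk (run_db D A) r \<and>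
     snd (walk_src (run_db D A) r) \<in> init A \<and> snd (walk_tgt (run_db D A) r) \<in> final A"

definition proj_D :: "('v \<times> 'q, 'e \<times> ('q \<times> 's \<times> 'q)) walk \<Rightarrow> ('v, 'e) walk" where
  "proj_D r = (fst (fst r), map fst (snd r))"

text \<open>Support of the walk semantics and simple-run semantics bags
  (a walk belongs to the bag iff its multiplicity is positive).\<close>
definition sem_W :: "('s, 'v, 'e) db \<Rightarrow> ('s, 'q) automaton \<Rightarrow> ('v, 'e) walk set" where
  "sem_W D A = {proj_D r | r. is_run D A r}"

definition sem_SR :: "('s, 'v, 'e) db \<Rightarrow> ('s, 'q) automaton \<Rightarrow> ('v, 'e) walk set" where
  "sem_SR D A = {proj_D r | r. is_run D A r \<and> simple_walk (run_db D A) r}"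

definition P_st :: "('s, 'v, 'e) db \<Rightarrow> ('s, 'q) automaton \<Rightarrow> 'v \<Rightarrow> 'v \<Rightarrow> ('v, 'e) walk set" where
  "P_st D A s t = {w \<in> sem_W D A. walk_src D w = s \<and> walk_tgt D w = t}"

end

theory Submission
  imports Defs
begin

text \<open>If a run repeats a vertex of the run database, cutting out the cycle between the two
  visits leaves a shorter run with the same first and last vertex, hence with an initial
  start state and a final end state. Its projection is a shorter walk from s to t in the
  walk semantics. So a minimal walk of P_st is the projection of a run without repeated
  vertices.\<close>

lemma length_walk_verts [simp]: "length (walk_verts G w) = Suc (walk_len w)"
  by (simp add: walk_verts_def walk_len_def)

lemma is_walk_iff_map_src:
  "is_walk G w \<longleftrightarrow>
     fst w \<in> verts G \<and> set (snd w) \<subseteq> edges G \<and> map (src G) (snd w) = butlast (walk_verts G w)"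
proof -
  have "map (src G) (snd w) = butlast (walk_verts G w) \<longleftrightarrow>
        (\<forall>i < length (snd w). src G (snd w ! i) = walk_verts G w ! i)"
    by (simp add: list_eq_iff_nth_eq nth_butlast walk_len_def)
  then show ?thesis by (simp add: is_walk_def)
qed

lemma walk_verts_cut:
  assumes "i < j" "j \<le> length es"
    and "walk_verts G (v, es) ! i = walk_verts G (v, es) ! j"
  shows "walk_verts G (v, take i es @ drop j es)
         = take i (walk_verts G (v, es)) @ drop j (walk_verts G (v, es))"
proof -
  let ?vs = "walk_verts G (v, es)"
  have "take (Suc i) ?vs = take i ?vs @ [?vs ! j]"
    using assms by (simp add: take_Suc_conv_app_nth walk_len_def)
  moreover have "?vs ! j # drop (Suc j) ?vs = drop j ?vs"
    using assms(2) by (simp add: Cons_nth_drop_Suc walk_len_def)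
  moreover have "walk_verts G (v, take i es @ drop j es) = take (Suc i) ?vs @ drop (Suc j) ?vs"
    using assms(1,2) by (simp add: walk_verts_def take_map drop_map)
  ultimately show ?thesis by simp
qed

lemma
  assumes walk: "is_walk G (v, es)" and ij: "i < j" "j \<le> length es"
    and loop: "walk_verts G (v, es) ! i = walk_verts G (v, es) ! j"
  shows is_walk_cut: "is_walk G (v, take i es @ drop j es)"
    and walk_tgt_cut: "walk_tgt G (v, take i es @ drop j es) = walk_tgt G (v, es)"
proof -
  let ?vs = "walk_verts G (v, es)"
  have len: "j < length ?vs" using ij by (simp add: walk_len_def)
  have "map (src G) es = butlast ?vs"
    using walk by (simp add: is_walk_iff_map_src)
  then have "map (src G) (take i es @ drop j es) = take i (butlast ?vs) @ drop j (butlast ?vs)"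
    by (metis map_append take_map drop_map)
  also have "\<dots> = butlast (take i ?vs @ drop j ?vs)"
    using ij len by (simp add: butlast_append take_butlast butlast_drop)
  finally show "is_walk G (v, take i es @ drop j es)"
    using walk walk_verts_cut[OF ij loop]
    by (auto simp: is_walk_iff_map_src dest: in_set_takeD in_set_dropD)
  show "walk_tgt G (v, take i es @ drop j es) = walk_tgt G (v, es)"
    using len by (simp add: walk_tgt_def walk_verts_cut[OF ij loop])
qed

lemma walk_shortcut:
  assumes walk: "is_walk G w" and "\<not> distinct (walk_verts G w)"
  obtains w' where "is_walk G w'" "walk_src G w' = walk_src G w"
    "walk_tgt G w' = walk_tgt G w" "walk_len w' < walk_len w"
proof -
  obtain v es where w: "w = (v, es)" by (cases w)
  obtain i j where ij: "i < j" "j < length (walk_verts G w)"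
    and loop: "walk_verts G w ! i = walk_verts G w ! j"
    using assms(2) by (metis distinct_conv_nth linorder_neqE_nat)
  let ?w' = "(v, take i es @ drop j es)"
  have j: "j \<le> length es" using ij w by (simp add: walk_len_def)
  show ?thesis
  proof
    show "is_walk G ?w'" "walk_tgt G ?w' = walk_tgt G w"
      using is_walk_cut[OF _ ij(1) j] walk_tgt_cut[OF _ ij(1) j] loop walk w by simp_all
    show "walk_src G ?w' = walk_src G w" "walk_len ?w' < walk_len w"
      using ij(1) j w by (auto simp: walk_src_def walk_len_def)
  qed
qed

lemma walk_len_proj_D [simp]: "walk_len (proj_D r) = walk_len r"
  by (simp add: walk_len_def proj_D_def)

lemma walk_verts_proj_D: "walk_verts D (proj_D r) = map fst (walk_verts (run_db D A) r)"
  by (auto simp: walk_verts_def proj_D_def run_db_def split: prod.splits)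

lemma walk_src_proj_D: "walk_src D (proj_D r) = fst (walk_src (run_db D A) r)"
  by (simp add: walk_src_def proj_D_def)

lemma walk_tgt_proj_D: "walk_tgt D (proj_D r) = fst (walk_tgt (run_db D A) r)"
  unfolding walk_tgt_def walk_verts_proj_D[of D r A] by (simp add: last_map walk_verts_def)

lemma proj_D_run_in_P_st:
  assumes "is_run D A r"
  shows "proj_D r \<in> P_st D A (fst (walk_src (run_db D A) r)) (fst (walk_tgt (run_db D A) r))"
  using assms walk_src_proj_D[of D r A] walk_tgt_proj_D[of D r A]
  unfolding P_st_def sem_W_def by blast

theorem proposition19:
  fixes \<Sigma> :: "'s set" and D :: "('s, 'v, 'e) db" and A :: "('s, 'q) automaton"
    and s t :: 'v and w :: "('v, 'e) walk"
  assumes "wf_db \<Sigma> D" and "wf_aut \<Sigma> A"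
    and "s \<in> verts D" and "t \<in> verts D"
    and "w \<in> P_st D A s t"
    and "\<forall>w' \<in> P_st D A s t. walk_len w \<le> walk_len w'"
  shows "w \<in> sem_SR D A"
proof -
  from assms(5) obtain r where run: "is_run D A r" and w: "w = proj_D r"
    and "walk_src D w = s" "walk_tgt D w = t"
    unfolding P_st_def sem_W_def by blast
  then have st: "fst (walk_src (run_db D A) r) = s" "fst (walk_tgt (run_db D A) r) = t"
    by (simp_all add: walk_src_proj_D[of D r A] walk_tgt_proj_D[of D r A])
  have "distinct (walk_verts (run_db D A) r)"
  proof (rule ccontr)
    assume "\<not> distinct (walk_verts (run_db D A) r)"
    moreover have "is_walk (run_db D A) r" using run by (simp add: is_run_def)
    ultimately obtain r' where "is_walk (run_db D A) r'"
      and same_ends: "walk_src (run_db D A) r' = walk_src (run_db D A) r"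
        "walk_tgt (run_db D A) r' = walk_tgt (run_db D A) r"
      and shorter: "walk_len r' < walk_len r"
      using walk_shortcut by blast
    with run have "is_run D A r'" by (simp add: is_run_def)
    then have "proj_D r' \<in> P_st D A s t"
      using proj_D_run_in_P_st[of D A r'] st same_ends by simp
    with assms(6) have "walk_len w \<le> walk_len (proj_D r')" by blast
    with shorter w show False by simp
  qed
  with run w show ?thesis unfolding sem_SR_def simple_walk_def is_run_def by blast
qed

end
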